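(* Let $E$ be a finite set and $\mathcal{O}\subseteq\{+,-,0\}^E$ satisfy (O3): $X,Y\in\mathcal{O}\Rightarrow X\circ Y\in\mathcal{O}$. Then $\mathcal{O}$ satisfies (O4) if and only if it satisfies (O4'), where (O4): if $X,Y\in\mathcal{O}$ with $\underline{X}=\underline{Y}$ and $X\neq Y$, then $I_e(X,Y)\cap\mathcal{O}\neq\emptyset$ for all $e\in S(X,Y)$; (O4'): if $X,Y\in\mathcal{O}$ with $\underline{X}=\underline{Y}$ and $X\neq Y$, then $I(X,Y)\cap\mathcal{O}\neq\emptyset$.
   Context: For $X\in\{+,-,0\}^E$: support $\underline{X}=\{e:X_e\neq0\}$; composition $(X\circ Y)_e=X_e$ if $X_e\neq0$, else $Y_e$; separation set $S(X,Y)=\{e: X_e,Y_e\neq0, X_e\neq Y_e\}$. For $X,Y$ with $\underline{X}=\underline{Y}$, $X\neq Y$ and $e\in S(X,Y)$: $I_e(X,Y)=\{V\in\{+,-,0\}^E : \underline{V}\subseteq\underline{X}\setminus\{e\},\ V_f=X_f\ \forall f\notin S(X,Y)\}$ and $I(X,Y)=\bigcup_{e\in S(X,Y)}I_e(X,Y)$. *)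

theory Defs
  imports Main
begin

datatype sign = Pos | Neg | Zero

type_synonym 'e covector = "'e \<Rightarrow> sign"

definition supp :: "'e covector \<Rightarrow> 'e set" where
  "supp X = {e. X e \<noteq> Zero}"

definition comp :: "'e covector \<Rightarrow> 'e covector \<Rightarrow> 'e covector" where
  "comp X Y = (\<lambda>e. if X e \<noteq> Zero then X e else Y e)"

definition sep :: "'e covector \<Rightarrow> 'e covector \<Rightarrow> 'e set" where
  "sep X Y = {e. X e \<noteq> Zero \<and> Y e \<noteq> Zero \<and> X e \<noteq> Y e}"

definition Ie :: "'e \<Rightarrow> 'e covector \<Rightarrow> 'e covector \<Rightarrow> 'e covector set" where
  "Ie e X Y = {V. supp V \<subseteq> supp X - {e} \<and> (\<forall>f. f \<notin> sep X Y \<longrightarrow> V f = X f)}"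

definition I_all :: "'e covector \<Rightarrow> 'e covector \<Rightarrow> 'e covector set" where
  "I_all X Y = (\<Union>e\<in>sep X Y. Ie e X Y)"

definition O3 :: "'e covector set \<Rightarrow> bool" where
  "O3 \<O> \<longleftrightarrow> (\<forall>X\<in>\<O>. \<forall>Y\<in>\<O>. comp X Y \<in> \<O>)"

definition O4 :: "'e covector set \<Rightarrow> bool" where
  "O4 \<O> \<longleftrightarrow> (\<forall>X\<in>\<O>. \<forall>Y\<in>\<O>. supp X = supp Y \<and> X \<noteq> Y \<longrightarrow>
      (\<forall>e\<in>sep X Y. Ie e X Y \<inter> \<O> \<noteq> {}))"

definition O4' :: "'e covector set \<Rightarrow> bool" where
  "O4' \<O> \<longleftrightarrow> (\<forall>X\<in>\<O>. \<forall>Y\<in>\<O>. supp X = supp Y \<and> X \<noteq> Y \<longrightarrow>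
      I_all X Y \<inter> \<O> \<noteq> {})"

end

theory Submission
  imports Defs
begin

(* (O4) gives (O4') at once, since two distinct covectors with equal support separate somewhere.
   Conversely, by induction on |S(X,Y)|: (O4') gives V in I_f(X,Y), and we are done if V_e = 0.
   Otherwise V_e equals X_e or Y_e; in the first case W = V o Y still separates from Y at e,
   but no longer at f, and I_e(W,Y) is contained in I_e(X,Y); the second case is symmetric. *)

lemma sep_commute: "sep X Y = sep Y X"
  unfolding sep_def by auto

lemma same_supp_zero_iff: "supp X = supp Y \<Longrightarrow> X g = Zero \<longleftrightarrow> Y g = Zero"
  unfolding supp_def by blast

lemma same_supp_eq_outside_sep:
  assumes "supp X = supp Y" "g \<notin> sep X Y"
  shows "X g = Y g"
  using assms same_supp_zero_iff[OF assms(1), of g] unfolding sep_def by auto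

lemma same_supp_sep_nonempty:
  assumes "supp X = supp Y" "X \<noteq> Y"
  shows "sep X Y \<noteq> {}"
proof -
  obtain g where "X g \<noteq> Y g" using assms(2) by blast
  then have "g \<in> sep X Y" using same_supp_eq_outside_sep[OF assms(1)] by blast
  then show ?thesis by blast
qed

lemma O4_imp_I_all_nonempty:
  assumes "O4 \<O>" "X \<in> \<O>" "Y \<in> \<O>" "supp X = supp Y" "X \<noteq> Y"
  shows "I_all X Y \<inter> \<O> \<noteq> {}"
proof -
  obtain g where g: "g \<in> sep X Y" using same_supp_sep_nonempty[OF assms(4,5)] by blast
  then have "Ie g X Y \<inter> \<O> \<noteq> {}" using assms(1-5) unfolding O4_def by simp
  moreover have "Ie g X Y \<subseteq> I_all X Y" using g unfolding I_all_def by blast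
  ultimately show ?thesis by blast
qed

lemma Ie_commute:
  assumes "supp X = supp Y"
  shows "Ie e X Y = Ie e Y X"
  using assms same_supp_eq_outside_sep[OF assms] unfolding Ie_def sep_commute[of X Y] by auto

lemma sep_value_cases:
  assumes "e \<in> sep X Y" "V e \<noteq> Zero"
  shows "V e = X e \<or> V e = Y e"
  using assms unfolding sep_def by (cases "V e"; cases "X e"; cases "Y e") auto

lemma Ie_comp_reduces:
  assumes supp: "supp X = supp Y"
    and f: "f \<in> sep X Y" and V: "V \<in> Ie f X Y"
    and e: "e \<in> sep X Y" and Ve: "V e = X e"
  shows "supp (comp V Y) = supp Y"
    and "sep (comp V Y) Y \<subset> sep X Y"
    and "e \<in> sep (comp V Y) Y"
    and "Ie e (comp V Y) Y \<subseteq> Ie e X Y"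
proof -
  let ?W = "comp V Y"
  have V_supp: "supp V \<subseteq> supp Y - {f}" and V_out: "\<And>g. g \<notin> sep X Y \<Longrightarrow> V g = X g"
    using V supp unfolding Ie_def by auto
  have XY_out: "\<And>g. g \<notin> sep X Y \<Longrightarrow> X g = Y g"
    using same_supp_eq_outside_sep[OF supp] .
  show W_supp: "supp ?W = supp Y"
    using V_supp unfolding supp_def comp_def by auto
  have W_sep: "sep ?W Y \<subseteq> sep X Y - {f}"
  proof
    fix g assume g: "g \<in> sep ?W Y"
    then have Vg: "V g \<noteq> Zero" "V g \<noteq> Y g"
      unfolding comp_def sep_def by (auto split: if_splits)
    then have "g \<noteq> f" using V_supp unfolding supp_def by blast
    moreover have "g \<in> sep X Y" using Vg(2) V_out XY_out by metis
    ultimately show "g \<in> sep X Y - {f}" by blast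
  qed
  then show "sep ?W Y \<subset> sep X Y" using f by blast
  show "e \<in> sep ?W Y" using e Ve unfolding comp_def sep_def by auto
  have W_out: "?W g = X g" if "g \<notin> sep X Y" for g
    using V_out[OF that] XY_out[OF that] unfolding comp_def by simp
  show "Ie e ?W Y \<subseteq> Ie e X Y"
  proof
    fix U assume "U \<in> Ie e ?W Y"
    then have U_supp: "supp U \<subseteq> supp X - {e}"
      and U_out: "\<And>g. g \<notin> sep ?W Y \<Longrightarrow> U g = ?W g"
      unfolding Ie_def W_supp supp by auto
    have "U g = X g" if "g \<notin> sep X Y" for g
    proof -
      have "g \<notin> sep ?W Y" using W_sep that by blast
      then show ?thesis using U_out W_out[OF that] by simp
    qed
    with U_supp show "U \<in> Ie e X Y" unfolding Ie_def by blast
  qed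
qed

lemma O4'_imp_Ie_nonempty:
  fixes \<O> :: "('e::finite) covector set"
  assumes O3: "O3 \<O>" and O4': "O4' \<O>"
    and "X \<in> \<O>" "Y \<in> \<O>" "supp X = supp Y" "e \<in> sep X Y"
  shows "Ie e X Y \<inter> \<O> \<noteq> {}"
  using assms(3-)
proof (induction "card (sep X Y)" arbitrary: X Y rule: less_induct)
  case less
  have "X \<noteq> Y" using less.prems(4) unfolding sep_def by auto
  then obtain f V where f: "f \<in> sep X Y" and V: "V \<in> Ie f X Y" "V \<in> \<O>"
    using O4' less.prems unfolding O4'_def I_all_def by blast
  have reduce: "Ie e A B \<inter> \<O> \<noteq> {}"
    if AB: "A \<in> \<O>" "B \<in> \<O>" "supp A = supp B" "sep A B = sep X Y"
      and "f \<in> sep A B" "V \<in> Ie f A B" "e \<in> sep A B" "V e = A e" for A B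
  proof -
    note W = Ie_comp_reduces[OF AB(3) that(5-8)]
    have "comp V B \<in> \<O>" using O3 V(2) AB(2) unfolding O3_def by blast
    moreover have "card (sep (comp V B) B) < card (sep X Y)"
      using W(2) AB(4) by (simp add: psubset_card_mono)
    ultimately have "Ie e (comp V B) B \<inter> \<O> \<noteq> {}"
      using less.hyps AB(2) W(1,3) by blast
    then show ?thesis using W(4) by blast
  qed
  consider "V e = Zero" | "V e = X e" | "V e = Y e"
    using sep_value_cases[OF less.prems(4)] by blast
  then show ?case
  proof cases
    case 1
    then have "V \<in> Ie e X Y" using V(1) unfolding Ie_def supp_def by auto
    then show ?thesis using V(2) by blast
  next
    case 2
    then show ?thesis using reduce less.prems f V(1) by blast
  next
    case 3
    have YX: "supp Y = supp X" "sep Y X = sep X Y" "Ie f Y X = Ie f X Y" "Ie e Y X = Ie e X Y"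
      using less.prems(3) sep_commute[of Y X] Ie_commute[of Y X] by simp_all
    have "Ie e Y X \<inter> \<O> \<noteq> {}"
      by (rule reduce) (use less.prems f V(1) 3 YX in simp_all)
    then show ?thesis using YX(4) by simp
  qed
qed

theorem lemma2p1:
  fixes \<O> :: "('e::finite) covector set"
  assumes "O3 \<O>"
  shows "O4 \<O> \<longleftrightarrow> O4' \<O>"
proof
  assume "O4 \<O>"
  show "O4' \<O>"
    unfolding O4'_def using O4_imp_I_all_nonempty[OF \<open>O4 \<O>\<close>] by blast
next
  assume "O4' \<O>"
  show "O4 \<O>"
    unfolding O4_def using O4'_imp_Ie_nonempty[OF assms \<open>O4' \<O>\<close>] by blast
qed

end
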